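(* Let $\alpha>1$, $\beta\ge0$, and suppose the Fourier coefficients of $V$ satisfy $|v_k(0)|\le c_v e^{-\beta|k|}\langle k\rangle^{-\alpha}$ for all $k\in\mathbb{Z}$ (e.g. $V\in C^{\alpha,\beta,1}$). Then for all $j,k\in\mathbb{Z}$ $$|G_{jk}|\le \frac{3c_v e^{-\beta|j-k|}}{(\langle j\rangle+\langle k\rangle)\langle j-k\rangle^{\alpha}},$$ and for every $n\ge2$ $$|(G^n)_{jk}|\le \frac{(3c_v)^n c_\alpha^{\,n-1}e^{-\beta|j-k|}}{\langle j\rangle\langle k\rangle\langle j-k\rangle^{\alpha}}.$$
   Context: $V(x,t)=\sum_{k\in\mathbb{Z}}v_k(t)e^{ikx}$ is real-valued with $v_0\equiv0$; $\langle k\rangle=|k|+1$. $G$ is the infinite matrix (operator on $l^2(\mathbb{Z})$) with $G_{jk}=0$ if $j^2=k^2$ and $G_{jk}=\frac{v_{j-k}(0)}{j^2-k^2}$ if $j^2\ne k^2$. For $\nu>1$, $c_\nu$ denotes a constant depending only on $\nu$ such that for all $\beta\ge0$ and $s,m\in\mathbb{Z}$: $\sum_{k\in\mathbb{Z}}\frac{e^{-\beta|s-k|-\beta|k-m|}}{\langle s-k\rangle^\nu\langle k-m\rangle^\nu}\le\frac{c_\nu e^{-\beta|s-m|}}{\langle s-m\rangle^\nu}$. *)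

theory Defs
  imports "HOL-Analysis.Analysis"
begin

definition jbr :: "int \<Rightarrow> real" where
  "jbr k = real_of_int \<bar>k\<bar> + 1"

definition Gmat :: "(int \<Rightarrow> complex) \<Rightarrow> int \<Rightarrow> int \<Rightarrow> complex" where
  "Gmat v j k = (if j^2 = k^2 then 0 else v (j - k) / of_int (j^2 - k^2))"

fun Gpow :: "(int \<Rightarrow> int \<Rightarrow> complex) \<Rightarrow> nat \<Rightarrow> int \<Rightarrow> int \<Rightarrow> complex" where
  "Gpow G 0 j k = (if j = k then 1 else 0)"
| "Gpow G (Suc n) j k = infsum (\<lambda>m. Gpow G n j m * G m k) UNIV"

end

theory Submission
  imports Defs
begin

text \<open>If \<open>j\<^sup>2 \<noteq> k\<^sup>2\<close>, then \<open>|j\<^sup>2 - k\<^sup>2| = |j - k| |j + k|\<close> dominates both \<open>|j - k|\<close> and \<open>|j + k|\<close>,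
  whose maximum is \<open>|j| + |k|\<close>; hence \<open>\<langle>j\<rangle> + \<langle>k\<rangle> \<le> 3 |j\<^sup>2 - k\<^sup>2|\<close>, which gives the bound on \<open>G\<close>.
  For \<open>G^n = G^(n-1) G\<close> one drops the weight of the middle index \<open>m\<close> from both factors,
  keeping \<open>1/\<langle>j\<rangle>\<close> from the left and \<open>1/\<langle>k\<rangle>\<close> from the right; the remaining sum over \<open>m\<close> is the
  convolution of two weights \<open>e^(-\<beta>|\<cdot>|) / \<langle>\<cdot>\<rangle>^\<alpha>\<close>, which costs the factor \<open>c\<^sub>\<alpha>\<close>.\<close>

lemma jbr_pos: "jbr k > 0" and jbr_ge_1: "jbr k \<ge> 1"
  by (auto simp: jbr_def)

lemma summable_on_inverse_jbr_powr:
  fixes \<alpha> :: real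
  assumes "\<alpha> > 1"
  shows "(\<lambda>m::int. 1 / jbr m powr \<alpha>) summable_on UNIV"
proof -
  let ?f = "\<lambda>m::int. 1 / jbr m powr \<alpha>"
  have "summable (\<lambda>n::nat. real (Suc n) powr (- \<alpha>))"
    using assms by (subst summable_Suc_iff) (simp add: summable_real_powr_iff)
  hence nat: "(\<lambda>n::nat. 1 / (real n + 1) powr \<alpha>) summable_on UNIV"
    by (subst summable_on_UNIV_nonneg_real_iff) (auto simp: powr_minus_divide add.commute)
  have "?f summable_on range int"
    using nat by (subst summable_on_reindex) (auto simp: o_def jbr_def)
  moreover have "?f summable_on range (\<lambda>n. - int n)"
    using nat by (subst summable_on_reindex) (auto simp: o_def jbr_def inj_on_def)
  moreover have "range int \<union> range (\<lambda>n. - int n) = UNIV"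
    by (auto intro: int_cases2)
  ultimately show ?thesis
    by (metis summable_on_union)
qed

lemma summable_on_inverse_jbr_powr_shift:
  fixes \<alpha> :: real
  assumes "\<alpha> > 1"
  shows "(\<lambda>m::int. 1 / jbr (a - m) powr \<alpha>) summable_on UNIV"
proof -
  have "bij_betw (\<lambda>m. a - m) UNIV (UNIV :: int set)"
    by (rule bij_betwI[where g = "\<lambda>m. a - m"]) auto
  from summable_on_reindex_bij_betw[OF this, of "\<lambda>m. 1 / jbr m powr \<alpha>"] show ?thesis
    using summable_on_inverse_jbr_powr[OF assms] by simp
qed

lemma jbr_add_le_abs_power2_diff:
  fixes j k :: int
  assumes "j\<^sup>2 \<noteq> k\<^sup>2"
  shows "jbr j + jbr k \<le> 3 * \<bar>j\<^sup>2 - k\<^sup>2\<bar>"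
proof -
  have "j \<noteq> k" "j \<noteq> - k" using assms by auto
  hence ge1: "\<bar>j - k\<bar> \<ge> 1" "\<bar>j + k\<bar> \<ge> 1" by auto
  have prod: "\<bar>j\<^sup>2 - k\<^sup>2\<bar> = \<bar>j - k\<bar> * \<bar>j + k\<bar>"
    by (simp add: power2_eq_square abs_mult[symmetric] algebra_simps)
  have "\<bar>j - k\<bar> \<le> \<bar>j - k\<bar> * \<bar>j + k\<bar>" "\<bar>j + k\<bar> \<le> \<bar>j - k\<bar> * \<bar>j + k\<bar>"
    using ge1 mult_left_mono[of 1 "\<bar>j + k\<bar>" "\<bar>j - k\<bar>"] mult_right_mono[of 1 "\<bar>j - k\<bar>" "\<bar>j + k\<bar>"]
    by simp_all
  hence "\<bar>j\<bar> + \<bar>k\<bar> + 2 \<le> 3 * \<bar>j\<^sup>2 - k\<^sup>2\<bar>"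
    using ge1 prod by (smt (verit) mult_left_mono)
  thus ?thesis
    unfolding jbr_def by linarith
qed

lemma norm_Gmat_le:
  fixes v :: "int \<Rightarrow> complex" and \<alpha> \<beta> cv :: real
  assumes v: "\<And>k. norm (v k) \<le> cv * exp (- \<beta> * real_of_int \<bar>k\<bar>) / jbr k powr \<alpha>"
  shows "norm (Gmat v j k) \<le> 3 * cv * exp (- \<beta> * real_of_int \<bar>j - k\<bar>) / ((jbr j + jbr k) * jbr (j - k) powr \<alpha>)"
proof (cases "j\<^sup>2 = k\<^sup>2")
  case True
  have "cv \<ge> 0"
    using order_trans[OF norm_ge_zero v[of 0]] by (simp add: jbr_def)
  with True show ?thesis
    by (simp add: Gmat_def add_pos_pos jbr_pos less_imp_le)
next
  case False
  let ?E = "cv * exp (- \<beta> * real_of_int \<bar>j - k\<bar>) / jbr (j - k) powr \<alpha>"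
  have pos: "real_of_int \<bar>j\<^sup>2 - k\<^sup>2\<bar> > 0"
    using False by (simp only: of_int_0_less_iff)
  have "norm (Gmat v j k) = norm (v (j - k)) / \<bar>j\<^sup>2 - k\<^sup>2\<bar>"
    using False unfolding Gmat_def by (simp only: if_False norm_divide norm_of_int)
  also have "\<dots> \<le> ?E / \<bar>j\<^sup>2 - k\<^sup>2\<bar>"
    using v[of "j - k"] pos by (intro divide_right_mono) auto
  also have "\<dots> \<le> ?E / ((jbr j + jbr k) / 3)"
    using jbr_add_le_abs_power2_diff[OF False] order_trans[OF norm_ge_zero v[of "j - k"]] pos
    by (intro divide_left_mono mult_pos_pos) (simp_all add: add_pos_pos jbr_pos)
  also have "\<dots> = 3 * cv * exp (- \<beta> * real_of_int \<bar>j - k\<bar>) / ((jbr j + jbr k) * jbr (j - k) powr \<alpha>)"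
    by (simp add: mult_ac)
  finally show ?thesis .
qed

lemma norm_Gmat_le_row_column:
  fixes v :: "int \<Rightarrow> complex" and \<alpha> \<beta> cv :: real
  assumes v: "\<And>k. norm (v k) \<le> cv * exp (- \<beta> * real_of_int \<bar>k\<bar>) / jbr k powr \<alpha>"
  shows "norm (Gmat v j k) \<le> 3 * cv * exp (- \<beta> * real_of_int \<bar>j - k\<bar>) / (jbr j * jbr (j - k) powr \<alpha>)"
    and "norm (Gmat v j k) \<le> 3 * cv * exp (- \<beta> * real_of_int \<bar>j - k\<bar>) / (jbr k * jbr (j - k) powr \<alpha>)"
proof -
  let ?E = "3 * cv * exp (- \<beta> * real_of_int \<bar>j - k\<bar>)"
  have G: "norm (Gmat v j k) \<le> ?E / ((jbr j + jbr k) * jbr (j - k) powr \<alpha>)"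
    by (rule norm_Gmat_le[OF v])
  have "?E \<ge> 0"
    using order_trans[OF norm_ge_zero v[of 0]] by (simp add: jbr_def)
  hence "?E / ((jbr j + jbr k) * jbr (j - k) powr \<alpha>) \<le> ?E / (i * jbr (j - k) powr \<alpha>)"
    if "i = jbr j \<or> i = jbr k" for i
    using that jbr_pos[of j] jbr_pos[of k] jbr_pos[of "j - k"]
    by (intro divide_left_mono mult_right_mono mult_pos_pos) auto
  with G show "norm (Gmat v j k) \<le> ?E / (jbr j * jbr (j - k) powr \<alpha>)"
    and "norm (Gmat v j k) \<le> ?E / (jbr k * jbr (j - k) powr \<alpha>)"
    by (blast intro: order_trans)+
qed

lemma summable_on_convolution_weight:
  fixes \<alpha> \<beta> :: real
  assumes "\<alpha> > 1" and "\<beta> \<ge> 0"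
  shows "(\<lambda>m. exp (- \<beta> * real_of_int \<bar>j - m\<bar> - \<beta> * real_of_int \<bar>m - k\<bar>)
            / (jbr (j - m) powr \<alpha> * jbr (m - k) powr \<alpha>)) summable_on UNIV"
proof (rule summable_on_comparison_test[OF summable_on_inverse_jbr_powr_shift[OF \<open>\<alpha> > 1\<close>, of j]])
  fix m
  have "exp (- \<beta> * real_of_int \<bar>j - m\<bar> - \<beta> * real_of_int \<bar>m - k\<bar>) \<le> 1"
    using mult_nonneg_nonneg[OF \<open>\<beta> \<ge> 0\<close>, of "real_of_int \<bar>j - m\<bar>"]
      mult_nonneg_nonneg[OF \<open>\<beta> \<ge> 0\<close>, of "real_of_int \<bar>m - k\<bar>"] by simp
  moreover have "jbr (m - k) powr \<alpha> \<ge> 1"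
    using jbr_ge_1[of "m - k"] \<open>\<alpha> > 1\<close> by (simp add: ge_one_powr_ge_zero)
  ultimately have "exp (- \<beta> * real_of_int \<bar>j - m\<bar> - \<beta> * real_of_int \<bar>m - k\<bar>)
      / (jbr (j - m) powr \<alpha> * jbr (m - k) powr \<alpha>) \<le> 1 / (jbr (j - m) powr \<alpha> * jbr (m - k) powr \<alpha>)"
    using jbr_pos[of "j - m"] jbr_pos[of "m - k"] by (intro divide_right_mono) auto
  also have "\<dots> \<le> 1 / jbr (j - m) powr \<alpha>"
    using \<open>jbr (m - k) powr \<alpha> \<ge> 1\<close> jbr_pos[of "j - m"]
    by (intro divide_left_mono) (auto simp: mult_le_cancel_left1 intro!: mult_pos_pos)
  finally show "exp (- \<beta> * real_of_int \<bar>j - m\<bar> - \<beta> * real_of_int \<bar>m - k\<bar>)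
      / (jbr (j - m) powr \<alpha> * jbr (m - k) powr \<alpha>) \<le> 1 / jbr (j - m) powr \<alpha>" .
qed simp

lemma norm_infsum_matrix_product_le:
  fixes A B :: "int \<Rightarrow> int \<Rightarrow> 'a :: {real_normed_algebra, banach}" and \<alpha> \<beta> c K L :: real
  assumes "\<alpha> > 1" and "\<beta> \<ge> 0"
    and conv: "\<And>s m. infsum (\<lambda>k. exp (- \<beta> * real_of_int \<bar>s - k\<bar> - \<beta> * real_of_int \<bar>k - m\<bar>)
                        / (jbr (s - k) powr \<alpha> * jbr (k - m) powr \<alpha>)) UNIV
           \<le> c * exp (- \<beta> * real_of_int \<bar>s - m\<bar>) / jbr (s - m) powr \<alpha>"
    and A: "\<And>j m. norm (A j m) \<le> K * exp (- \<beta> * real_of_int \<bar>j - m\<bar>) / (jbr j * jbr (j - m) powr \<alpha>)"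
    and B: "\<And>m k. norm (B m k) \<le> L * exp (- \<beta> * real_of_int \<bar>m - k\<bar>) / (jbr k * jbr (m - k) powr \<alpha>)"
  shows "norm (infsum (\<lambda>m. A j m * B m k) UNIV)
    \<le> K * L * c * exp (- \<beta> * real_of_int \<bar>j - k\<bar>) / (jbr j * jbr k * jbr (j - k) powr \<alpha>)"
proof -
  define h where "h m = exp (- \<beta> * real_of_int \<bar>j - m\<bar> - \<beta> * real_of_int \<bar>m - k\<bar>)
                        / (jbr (j - m) powr \<alpha> * jbr (m - k) powr \<alpha>)" for m
  define C where "C = K * L / (jbr j * jbr k)"
  have "K \<ge> 0" "L \<ge> 0"
    using order_trans[OF norm_ge_zero A[of 0 0]] order_trans[OF norm_ge_zero B[of 0 0]]
    by (simp_all add: jbr_def)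
  hence "C \<ge> 0"
    unfolding C_def by (simp add: jbr_pos less_imp_le)
  have "h summable_on UNIV"
    unfolding h_def[abs_def] using assms(1,2) by (rule summable_on_convolution_weight)
  hence Ch: "(\<lambda>m. C * h m) summable_on UNIV"
    by (rule summable_on_cmult_right)
  have term_le: "norm (A j m * B m k) \<le> C * h m" for m
  proof -
    have "norm (A j m * B m k) \<le> norm (A j m) * norm (B m k)"
      by (rule norm_mult_ineq)
    also have "\<dots> \<le> K * exp (- \<beta> * real_of_int \<bar>j - m\<bar>) / (jbr j * jbr (j - m) powr \<alpha>)
        * (L * exp (- \<beta> * real_of_int \<bar>m - k\<bar>) / (jbr k * jbr (m - k) powr \<alpha>))"
      using A B order_trans[OF norm_ge_zero A] by (intro mult_mono) auto
    also have "\<dots> = C * h m"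
      unfolding C_def h_def using jbr_pos[of j] jbr_pos[of k] jbr_pos[of "j - m"] jbr_pos[of "m - k"]
      by (simp add: exp_diff exp_minus field_simps)
    finally show ?thesis .
  qed
  have "(\<lambda>m. A j m * B m k) summable_on UNIV"
  proof (rule abs_summable_summable, rule Infinite_Sum.abs_summable_on_comparison_test)
    show "norm (A j m * B m k) \<le> norm (C * h m)" for m
      using term_le[of m] by simp
  qed (rule summable_on_iff_abs_summable_on_real[THEN iffD1, OF Ch])
  hence "norm (infsum (\<lambda>m. A j m * B m k) UNIV) \<le> infsum (\<lambda>m. C * h m) UNIV"
    by (rule norm_infsum_le[OF has_sum_infsum has_sum_infsum[OF Ch] term_le])
  also have "\<dots> = C * infsum h UNIV"
    by (rule infsum_cmult_right')
  also have "\<dots> \<le> C * (c * exp (- \<beta> * real_of_int \<bar>j - k\<bar>) / jbr (j - k) powr \<alpha>)"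
    using conv[of j k] \<open>C \<ge> 0\<close> unfolding h_def by (rule mult_left_mono)
  also have "\<dots> = K * L * c * exp (- \<beta> * real_of_int \<bar>j - k\<bar>) / (jbr j * jbr k * jbr (j - k) powr \<alpha>)"
    unfolding C_def by simp
  finally show ?thesis .
qed

lemma Gpow_Suc_0: "Gpow G (Suc 0) j k = G j k"
proof -
  have "Gpow G (Suc 0) j k = infsum (\<lambda>m. (if j = m then 1 else 0) * G m k) UNIV"
    by simp
  also have "\<dots> = infsum (\<lambda>m. G m k) {j}"
    by (rule infsum_cong_neutral) auto
  finally show ?thesis
    by simp
qed

lemma norm_Gpow_Gmat_le:
  fixes v :: "int \<Rightarrow> complex" and \<alpha> \<beta> cv c :: real
  assumes "\<alpha> > 1" and "\<beta> \<ge> 0" and "n \<ge> 2"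
    and v: "\<And>k. norm (v k) \<le> cv * exp (- \<beta> * real_of_int \<bar>k\<bar>) / jbr k powr \<alpha>"
    and conv: "\<And>s m. infsum (\<lambda>k. exp (- \<beta> * real_of_int \<bar>s - k\<bar> - \<beta> * real_of_int \<bar>k - m\<bar>)
                        / (jbr (s - k) powr \<alpha> * jbr (k - m) powr \<alpha>)) UNIV
           \<le> c * exp (- \<beta> * real_of_int \<bar>s - m\<bar>) / jbr (s - m) powr \<alpha>"
  shows "norm (Gpow (Gmat v) n j k)
    \<le> (3 * cv) ^ n * c ^ (n - 1) * exp (- \<beta> * real_of_int \<bar>j - k\<bar>) / (jbr j * jbr k * jbr (j - k) powr \<alpha>)"
  using \<open>n \<ge> 2\<close>
proof (induction n arbitrary: j k rule: dec_induct)
  case base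
  have "Gpow (Gmat v) 2 j k = infsum (\<lambda>m. Gmat v j m * Gmat v m k) UNIV"
    by (simp only: numeral_2_eq_2 Gpow.simps(2)[of _ "Suc 0"] Gpow_Suc_0)
  with norm_infsum_matrix_product_le[OF \<open>\<alpha> > 1\<close> \<open>\<beta> \<ge> 0\<close> conv norm_Gmat_le_row_column[OF v]]
  show ?case
    by (simp add: power2_eq_square)
next
  case (step n)
  let ?K = "(3 * cv) ^ n * c ^ (n - 1)"
  have row: "norm (Gpow (Gmat v) n j m) \<le> ?K * exp (- \<beta> * real_of_int \<bar>j - m\<bar>) / (jbr j * jbr (j - m) powr \<alpha>)"
    for j m
  proof -
    have "0 < jbr j * jbr m * jbr (j - m) powr \<alpha>"
      using jbr_pos[of j] jbr_pos[of m] jbr_pos[of "j - m"] by (intro mult_pos_pos) auto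
    hence "?K * exp (- \<beta> * real_of_int \<bar>j - m\<bar>) \<ge> 0"
      using order_trans[OF norm_ge_zero step.IH[of j m]] by (metis zero_le_divide_iff not_le)
    hence "?K * exp (- \<beta> * real_of_int \<bar>j - m\<bar>) / (jbr j * jbr m * jbr (j - m) powr \<alpha>)
        \<le> ?K * exp (- \<beta> * real_of_int \<bar>j - m\<bar>) / (jbr j * jbr (j - m) powr \<alpha>)"
      using jbr_ge_1[of m] jbr_pos[of j] jbr_pos[of "j - m"]
      by (intro divide_left_mono) (auto simp: mult_le_cancel_left1)
    with step.IH[of j m] show ?thesis
      by linarith
  qed
  have "(3 * cv) ^ Suc n * c ^ (Suc n - 1) = ?K * (3 * cv) * c"
    using step.hyps by (cases n) (auto simp: algebra_simps)
  with norm_infsum_matrix_product_le[OF \<open>\<alpha> > 1\<close> \<open>\<beta> \<ge> 0\<close> conv row norm_Gmat_le_row_column(2)[OF v]]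
  show ?case
    by (simp only: Gpow.simps(2))
qed

theorem mainTheorem4:
  fixes v :: "int \<Rightarrow> complex" and \<alpha> \<beta> cv c :: real
  assumes "\<alpha> > 1" and "\<beta> \<ge> 0"
    and "v 0 = 0"
    and "\<forall>k. v (- k) = cnj (v k)"
    and "\<forall>k. norm (v k) \<le> cv * exp (- \<beta> * real_of_int \<bar>k\<bar>) / jbr k powr \<alpha>"
    and "\<forall>b\<ge>0. \<forall>s m::int.
           infsum (\<lambda>k. exp (- b * real_of_int \<bar>s - k\<bar> - b * real_of_int \<bar>k - m\<bar>)
                        / (jbr (s - k) powr \<alpha> * jbr (k - m) powr \<alpha>)) UNIV
           \<le> c * exp (- b * real_of_int \<bar>s - m\<bar>) / jbr (s - m) powr \<alpha>"
  shows "(\<forall>j k. norm (Gmat v j k)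
            \<le> 3 * cv * exp (- \<beta> * real_of_int \<bar>j - k\<bar>) / ((jbr j + jbr k) * jbr (j - k) powr \<alpha>))
       \<and> (\<forall>n\<ge>2. \<forall>j k. norm (Gpow (Gmat v) n j k)
            \<le> (3 * cv) ^ n * c ^ (n - 1) * exp (- \<beta> * real_of_int \<bar>j - k\<bar>)
               / (jbr j * jbr k * jbr (j - k) powr \<alpha>))"
  using norm_Gmat_le[OF assms(5)[rule_format]]
    norm_Gpow_Gmat_le[OF assms(1,2) _ assms(5)[rule_format] assms(6)[rule_format, OF assms(2)]]
  by blast

end
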